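(* Let $(\varphi_n(x))_{n\in\mathbb{N}}$ be a symplectic basis. Then for every symplectic power series $\varphi(x)$ there exists a unique sequence $(a_n)_{n\in\mathbb{N}}$ of complex numbers such that for each $k\ge0$, $\varphi(x)-\sum_{i=0}^k a_i\varphi_i(x)\in\mathfrak m^{2k+2}$. Consequently $\varphi(x)=\sum_{i\ge0}a_i\varphi_i(x)$, the sum converging in the $\mathfrak m$-adic topology of $\mathbb{C}[[x]]$.
   Context: A formal power series $\varphi(x)=\sum_{i\ge0}\gamma_i x^i\in\mathbb{C}[[x]]$ is called symplectic if for every $m\ge1$ one has $\sum_{k=0}^{m-1}(-1)^k\binom{m-1}{k}\gamma_{m+k}=0$. Let $\mathfrak m=x\,\mathbb{C}[[x]]$ be the maximal ideal of $\mathbb{C}[[x]]$. A symplectic basis is a sequence $(\varphi_n(x))_{n\in\mathbb{N}}$ of symplectic power series such that each $\varphi_n(x)\in\mathfrak m^{2n}$ and its class in $\mathfrak m^{2n}/\mathfrak m^{2n+1}$ is nonzero. *)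

theory Defs
  imports "HOL-Computational_Algebra.Formal_Power_Series"
begin

definition symplectic :: "complex fps \<Rightarrow> bool" where
  "symplectic f \<longleftrightarrow>
     (\<forall>m::nat. m \<ge> 1 \<longrightarrow>
        (\<Sum>k=0..m-1. (-1)^k * of_nat ((m-1) choose k) * fps_nth f (m+k)) = 0)"

text \<open>Membership in the k-th power of the maximal ideal m = x C[[x]]:
  all coefficients below degree k vanish.\<close>
definition in_mpow :: "complex fps \<Rightarrow> nat \<Rightarrow> bool" where
  "in_mpow f k \<longleftrightarrow> (\<forall>i<k. fps_nth f i = 0)"

text \<open>Symplectic basis: each phi n symplectic, in m^(2n), with nonzero class
  in m^(2n)/m^(2n+1), i.e. nonzero coefficient of x^(2n).\<close>
definition symplectic_basis :: "(nat \<Rightarrow> complex fps) \<Rightarrow> bool" where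
  "symplectic_basis phi \<longleftrightarrow>
     (\<forall>n. symplectic (phi n) \<and> in_mpow (phi n) (2*n) \<and> fps_nth (phi n) (2*n) \<noteq> 0)"

end

theory Submission
  imports Defs
begin

text \<open>The coefficients are chosen greedily: subtracting the right multiple of \<open>phi k\<close> from a
  symplectic remainder of order \<open>\<ge> 2k\<close> kills its coefficient of \<open>x^(2k)\<close>, and the new
  remainder is still symplectic. A symplectic series of order \<open>\<ge> 2k+1\<close> has order
  \<open>\<ge> 2k+2\<close> for free, because its defining relation for \<open>m = k+1\<close> reduces to
  \<open>\<gamma>\<^sub>2\<^sub>k\<^sub>+\<^sub>1 = 0\<close>. Uniqueness holds because the coefficients of \<open>x^(2k)\<close> in
  the \<open>phi k\<close> are nonzero, and convergence follows from the growing orders of the remainders.\<close>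

lemma in_mpow_diff: "in_mpow f n \<Longrightarrow> in_mpow g n \<Longrightarrow> in_mpow (f - g) n"
  unfolding in_mpow_def by simp

lemma in_mpow_Suc_iff: "in_mpow f (Suc n) \<longleftrightarrow> in_mpow f n \<and> fps_nth f n = 0"
  unfolding in_mpow_def by (auto simp: less_Suc_eq)

lemma LIMSEQ_fps_in_mpow:
  assumes "\<And>k. in_mpow (f - S k) (d k)" and "filterlim d at_top sequentially"
  shows "S \<longlonglongrightarrow> f"
proof (rule tendsto_fpsI)
  fix n
  have "eventually (\<lambda>k. Suc n \<le> d k) sequentially"
    using assms(2) by (simp add: filterlim_at_top)
  moreover have "fps_nth (S k) n = fps_nth f n" if "Suc n \<le> d k" for k
    using assms(1)[of k] that by (simp add: in_mpow_def)
  ultimately show "eventually (\<lambda>k. fps_nth (S k) n = fps_nth f n) sequentially"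
    by (rule eventually_mono)
qed

lemma symplectic_diff_const_mult:
  assumes "symplectic f" "symplectic g"
  shows "symplectic (f - fps_const c * g)"
  unfolding symplectic_def
proof (intro allI impI)
  fix m :: nat assume "m \<ge> 1"
  let ?rel = "\<lambda>h. \<Sum>k=0..m-1. (-1)^k * of_nat ((m-1) choose k) * fps_nth h (m+k)"
  have "?rel (f - fps_const c * g) = ?rel f - c * ?rel g"
    by (simp add: algebra_simps sum_subtractf sum_distrib_left)
  with assms \<open>m \<ge> 1\<close> show "?rel (f - fps_const c * g) = 0"
    unfolding symplectic_def by simp
qed

lemma symplectic_in_mpow_odd_imp_even:
  assumes "symplectic f" "in_mpow f (2*k+1)"
  shows "in_mpow f (2*k+2)"
proof -
  have "0 = (\<Sum>j=0..k. (-1)^j * of_nat (k choose j) * fps_nth f (k+1+j))"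
    using assms(1) unfolding symplectic_def by (metis add_diff_cancel_right' le_add2)
  also have "\<dots> = (\<Sum>j\<in>{k}. (-1)^j * of_nat (k choose j) * fps_nth f (k+1+j))"
    by (rule sum.mono_neutral_right) (use assms(2) in \<open>auto simp: in_mpow_def\<close>)
  also have "\<dots> = (-1)^k * fps_nth f (2*k+1)"
    by (simp add: mult_2)
  finally have "fps_nth f (2*k+1) = 0" by simp
  with assms(2) show ?thesis by (simp add: in_mpow_Suc_iff)
qed

fun basis_remainder :: "(nat \<Rightarrow> complex fps) \<Rightarrow> complex fps \<Rightarrow> nat \<Rightarrow> complex fps" where
  "basis_remainder phi f 0 = f"
| "basis_remainder phi f (Suc k) = basis_remainder phi f k -
     fps_const (fps_nth (basis_remainder phi f k) (2*k) / fps_nth (phi k) (2*k)) * phi k"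

definition basis_coeff :: "(nat \<Rightarrow> complex fps) \<Rightarrow> complex fps \<Rightarrow> nat \<Rightarrow> complex" where
  "basis_coeff phi f k = fps_nth (basis_remainder phi f k) (2*k) / fps_nth (phi k) (2*k)"

lemma basis_remainder_eq:
  "basis_remainder phi f k = f - (\<Sum>i<k. fps_const (basis_coeff phi f i) * phi i)"
  by (induction k) (simp_all add: basis_coeff_def algebra_simps)

lemma basis_remainder_symplectic_in_mpow:
  assumes "symplectic_basis phi" "symplectic f"
  shows "symplectic (basis_remainder phi f k) \<and> in_mpow (basis_remainder phi f k) (2*k)"
proof (induction k)
  case 0
  show ?case using assms(2) by (simp add: in_mpow_def)
next
  case (Suc k)
  let ?r = "basis_remainder phi f"
  have phi: "symplectic (phi k)" "in_mpow (phi k) (2*k)" "fps_nth (phi k) (2*k) \<noteq> 0"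
    using assms(1) unfolding symplectic_basis_def by blast+
  have symp: "symplectic (?r (Suc k))"
    using symplectic_diff_const_mult[OF _ phi(1)] Suc by simp
  have "in_mpow (?r (Suc k)) (2*k)"
    using Suc phi(2) by (simp add: in_mpow_def)
  then have "in_mpow (?r (Suc k)) (2*k+1)"
    using phi(3) by (simp add: in_mpow_Suc_iff)
  then have "in_mpow (?r (Suc k)) (2*Suc k)"
    using symplectic_in_mpow_odd_imp_even[OF symp] by simp
  with symp show ?case ..
qed

lemma basis_coeff_approximates:
  assumes "symplectic_basis phi" "symplectic f"
  shows "in_mpow (f - (\<Sum>i\<le>k. fps_const (basis_coeff phi f i) * phi i)) (2*k+2)"
  using basis_remainder_symplectic_in_mpow[OF assms, of "Suc k"]
  by (simp add: basis_remainder_eq lessThan_Suc_atMost)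

lemma combination_in_mpow_imp_zero:
  assumes lead: "\<And>k. fps_nth (phi k) (2*k) \<noteq> 0"
    and "\<And>k. in_mpow (\<Sum>i\<le>k. fps_const (c i) * phi i) (2*k+2)"
  shows "c k = 0"
proof (induction k rule: less_induct)
  case (less k)
  then have "(\<Sum>i\<le>k. fps_const (c i) * phi i) = fps_const (c k) * phi k"
    by (subst sum.mono_neutral_right[where S = "{k}"]) auto
  with assms(2)[of k] have "c k * fps_nth (phi k) (2*k) = 0"
    by (simp add: in_mpow_def)
  with lead show ?case by simp
qed

lemma expansion_coeffs_unique:
  assumes lead: "\<And>k. fps_nth (phi k) (2*k) \<noteq> 0"
    and a: "\<And>k. in_mpow (f - (\<Sum>i\<le>k. fps_const (a i) * phi i)) (2*k+2)"
    and b: "\<And>k. in_mpow (f - (\<Sum>i\<le>k. fps_const (b i) * phi i)) (2*k+2)"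
  shows "a = b"
proof
  fix k
  have "b k - a k = 0"
  proof (rule combination_in_mpow_imp_zero[OF lead])
    fix k
    have "(f - (\<Sum>i\<le>k. fps_const (a i) * phi i)) - (f - (\<Sum>i\<le>k. fps_const (b i) * phi i))
        = (\<Sum>i\<le>k. fps_const (b i - a i) * phi i)"
      by (simp add: sum_subtractf left_diff_distrib flip: fps_const_sub)
    with in_mpow_diff[OF a[of k] b[of k]]
    show "in_mpow (\<Sum>i\<le>k. fps_const (b i - a i) * phi i) (2*k+2)" by simp
  qed
  then show "a k = b k" by simp
qed

theorem lemma2p3:
  fixes phi :: "nat \<Rightarrow> complex fps" and f :: "complex fps"
  assumes "symplectic_basis phi" and "symplectic f"
  shows "(\<exists>!a :: nat \<Rightarrow> complex.
           (\<forall>k. in_mpow (f - (\<Sum>i\<le>k. fps_const (a i) * phi i)) (2*k+2))) \<and>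
         (\<forall>a :: nat \<Rightarrow> complex.
           (\<forall>k. in_mpow (f - (\<Sum>i\<le>k. fps_const (a i) * phi i)) (2*k+2)) \<longrightarrow>
           (\<lambda>k. \<Sum>i\<le>k. fps_const (a i) * phi i) \<longlonglongrightarrow> f)"
proof (intro conjI ex1I allI impI)
  show "in_mpow (f - (\<Sum>i\<le>k. fps_const (basis_coeff phi f i) * phi i)) (2*k+2)" for k
    using basis_coeff_approximates[OF assms] .
next
  have lead: "fps_nth (phi k) (2*k) \<noteq> 0" for k
    using assms(1) by (simp add: symplectic_basis_def)
  fix b assume "\<forall>k. in_mpow (f - (\<Sum>i\<le>k. fps_const (b i) * phi i)) (2*k+2)"
  then show "b = basis_coeff phi f"
    using expansion_coeffs_unique[OF lead] basis_coeff_approximates[OF assms] by blast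
next
  fix a assume "\<forall>k. in_mpow (f - (\<Sum>i\<le>k. fps_const (a i) * phi i)) (2*k+2)"
  then show "(\<lambda>k. \<Sum>i\<le>k. fps_const (a i) * phi i) \<longlonglongrightarrow> f"
    by (intro LIMSEQ_fps_in_mpow[where d = "\<lambda>k. 2*k+2"] filterlim_subseq)
      (auto simp: strict_mono_def)
qed

end
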